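(* If $\gamma>-1/2$ and $\tau\in\mathbb{R}$, then the entire function $z\mapsto {}_1F_1(\gamma+i\tau;2\gamma+1;iz)e^{-iz/2}$ belongs to the Hermite–Biehler class.
   Context: The Hermite–Biehler class is the set of entire functions $E$ having no zeros in the upper half-plane $\{\operatorname{Im} z>0\}$ and satisfying $|E(z)|\ge|E(\bar z)|$ for $\operatorname{Im} z>0$. ${}_1F_1(\alpha;\beta;z)=\sum_{k\ge0}\frac{(\alpha)_k}{(\beta)_k}\frac{z^k}{k!}$ is the confluent hypergeometric function. *)

theory Defs
  imports "HOL-Complex_Analysis.Complex_Analysis"
begin

definition hyp1F1 :: "complex \<Rightarrow> complex \<Rightarrow> complex \<Rightarrow> complex" where
  "hyp1F1 a b z = (\<Sum>k. pochhammer a k / pochhammer b k * z ^ k / of_nat (fact k))"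

definition hermite_biehler :: "(complex \<Rightarrow> complex) \<Rightarrow> bool" where
  "hermite_biehler E \<longleftrightarrow>
     E holomorphic_on UNIV \<and>
     (\<forall>z. Im z > 0 \<longrightarrow> E z \<noteq> 0) \<and>
     (\<forall>z. Im z > 0 \<longrightarrow> norm (E z) \<ge> norm (E (cnj z)))"

end

theory Submission
  imports Defs "HOL-Real_Asymp.Real_Asymp"
begin

(*
  Write M(a, b, w) = 1F1(a; b; w), a = \<gamma> + i\<tau>, b = 2\<gamma> + 1 = a + cnj a + 1 and w = iz.  The
  conjugation symmetry of the series and Kummer's transformation
  M(a + 1, b, w) = e^w M(b - a - 1, b, -w) turn |E(cnj z)| < |E(z)| into
  |M(a + 1, b, w)| < |M(a, b, w)| for Re w < 0.  Along the ray t \<mapsto> t w the functions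
  F = e^(-tw/2) M(a, tw) and G = e^(-tw/2) M(a + 1, tw) satisfy a first-order system coming from
  the contiguous relations, and t^(2 Re a) (|F|^2 - |G|^2) has derivative
  -Re w t^(2 Re a) (|F|^2 + |G|^2) \<ge> 0.  It tends to 0 as t \<rightarrow> 0+ because 2 Re a > -1, so it is
  positive at t = 1.
*)

lemma fps_XD_hypergeo_1F1:
  "fps_XD (fps_hypergeo [a] [b] c) =
     fps_const a * (fps_hypergeo [a + 1] [b] c - fps_hypergeo [a] [b] (c :: complex))"
proof (rule fps_ext)
  fix n
  define q where "q = c ^ n / (pochhammer b n * fact n)"
  have "(fps_const a * (fps_hypergeo [a + 1] [b] c - fps_hypergeo [a] [b] c)) $ n
      = (a * pochhammer (a + 1) n - a * pochhammer a n) * q"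
    by (simp add: q_def algebra_simps)
  also have "a * pochhammer (a + 1) n = (a + of_nat n) * pochhammer a n"
    by (metis pochhammer_rec pochhammer_rec')
  also have "((a + of_nat n) * pochhammer a n - a * pochhammer a n) * q
      = fps_XD (fps_hypergeo [a] [b] c) $ n"
    by (simp add: q_def algebra_simps)
  finally show "fps_XD (fps_hypergeo [a] [b] c) $ n =
      (fps_const a * (fps_hypergeo [a + 1] [b] c - fps_hypergeo [a] [b] c)) $ n" ..
qed

lemma fps_XD_hypergeo_1F1_plus_1:
  assumes "b \<notin> \<int>\<^sub>\<le>\<^sub>0"
  shows "fps_XD (fps_hypergeo [a + 1] [b] c) =
           fps_const (b - a - 1) * (fps_hypergeo [a] [b] c - fps_hypergeo [a + 1] [b] c)
           + fps_const c * fps_X * fps_hypergeo [a + 1] [b] (c :: complex)"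
proof (rule fps_ext)
  fix n show "fps_XD (fps_hypergeo [a + 1] [b] c) $ n =
      (fps_const (b - a - 1) * (fps_hypergeo [a] [b] c - fps_hypergeo [a + 1] [b] c)
       + fps_const c * fps_X * fps_hypergeo [a + 1] [b] c) $ n"
  proof (cases n)
    case 0
    then show ?thesis by simp
  next
    case (Suc m)
    define x where "x = fps_hypergeo [a + 1] [b] c $ m"
    define d where "d = (b + of_nat m) * of_nat (Suc m)"
    have "b + of_nat m \<noteq> 0"
      using assms plus_of_nat_eq_0_imp by blast
    then have "d \<noteq> 0"
      by (simp add: d_def del: of_nat_Suc)
    have next_a1: "fps_hypergeo [a + 1] [b] c $ Suc m = x * c * (a + 1 + of_nat m) / d"
      by (simp add: x_def d_def pochhammer_rec' algebra_simps)
    have next_a: "fps_hypergeo [a] [b] c $ Suc m = x * c * a / d"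
      by (simp add: x_def d_def pochhammer_rec[of a] pochhammer_rec'[of b] algebra_simps)
    have "(fps_const (b - a - 1) * (fps_hypergeo [a] [b] c - fps_hypergeo [a + 1] [b] c)
           + fps_const c * fps_X * fps_hypergeo [a + 1] [b] c) $ n
        = (b - a - 1) * (x * c * a / d - x * c * (a + 1 + of_nat m) / d) + c * x"
      by (simp only: Suc next_a next_a1 x_def fps_add_nth fps_mult_left_const_nth fps_sub_nth
          mult.assoc fps_X_mult_nth nat.distinct if_False diff_Suc_1)
    also have "\<dots> = x * c * (d - (b - a - 1) * of_nat (Suc m)) / d"
      using \<open>d \<noteq> 0\<close> by (simp add: field_simps)
    also have "d - (b - a - 1) * of_nat (Suc m) = of_nat (Suc m) * (a + 1 + of_nat m)"
      by (simp add: d_def algebra_simps)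
    also have "x * c * (of_nat (Suc m) * (a + 1 + of_nat m)) / d
        = of_nat (Suc m) * (x * c * (a + 1 + of_nat m) / d)"
      by (simp add: mult_ac)
    also have "\<dots> = fps_XD (fps_hypergeo [a + 1] [b] c) $ n"
      by (simp only: Suc fps_XD_Suc next_a1)
    finally show ?thesis ..
  qed
qed

lemma fps_eq_0_if_contiguous_system:
  fixes d e :: "complex fps"
  assumes b: "b \<notin> \<int>\<^sub>\<le>\<^sub>0" and "d $ 0 = 0" "e $ 0 = 0"
    and XD_d: "fps_XD d = fps_const a * (e - d)"
    and XD_e: "fps_XD e = fps_const (b - a - 1) * (d - e) + fps_X * e"
  shows "d = 0 \<and> e = 0"
proof -
  have "d $ n = 0 \<and> e $ n = 0" for n
  proof (induction n)
    case 0
    then show ?case using assms by simp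
  next
    case (Suc n)
    define k :: complex where "k = of_nat (Suc n)"
    define \<beta> where "\<beta> = b - a - 1"
    have d: "k * d $ Suc n = a * (e $ Suc n - d $ Suc n)"
      using arg_cong[OF XD_d, of "\<lambda>f. f $ Suc n"] by (simp add: k_def)
    have e: "k * e $ Suc n = \<beta> * (d $ Suc n - e $ Suc n)"
      using arg_cong[OF XD_e, of "\<lambda>f. f $ Suc n"] Suc.IH by (simp add: k_def \<beta>_def)
    have "k \<noteq> 0" "b + of_nat n \<noteq> 0"
      using b plus_of_nat_eq_0_imp by (auto simp: k_def simp del: of_nat_Suc)
    moreover have "k + a + \<beta> = b + of_nat n"
      by (simp add: k_def \<beta>_def)
    \<comment> \<open>\<open>k (k + a + \<beta>)\<close> is the determinant of the linear system for the coefficients\<close>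
    moreover have "k * (k + a + \<beta>) * d $ Suc n = 0"
    proof -
      have "k * (k + a + \<beta>) * d $ Suc n
          = (k + \<beta>) * (k * d $ Suc n + a * d $ Suc n) - a * \<beta> * d $ Suc n"
        by (simp add: algebra_simps)
      also have "\<dots> = a * (k * e $ Suc n - \<beta> * (d $ Suc n - e $ Suc n))"
        by (simp add: d algebra_simps)
      finally show ?thesis by (simp add: e)
    qed
    moreover have "k * (k + a + \<beta>) * e $ Suc n = 0"
    proof -
      have "k * (k + a + \<beta>) * e $ Suc n
          = (k + a) * (k * e $ Suc n + \<beta> * e $ Suc n) - a * \<beta> * e $ Suc n"
        by (simp add: algebra_simps)
      also have "\<dots> = \<beta> * (k * d $ Suc n - a * (e $ Suc n - d $ Suc n))"
        by (simp add: e algebra_simps)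
      finally show ?thesis by (simp add: d)
    qed
    ultimately show ?case by simp
  qed
  then show ?thesis by (simp add: fps_eq_iff)
qed

lemma fps_XD_diff: "fps_XD (f - g) = fps_XD f - fps_XD (g :: 'a::comm_ring_1 fps)"
  by (simp add: fps_XD_def algebra_simps)

lemma fps_XD_fps_exp_mult:
  "fps_XD (fps_exp 1 * f) = fps_X * (fps_exp 1 * f) + fps_exp 1 * fps_XD (f :: complex fps)"
  by (simp add: fps_XD_def algebra_simps)

theorem fps_hypergeo_1F1_kummer:
  fixes a b :: complex
  assumes b: "b \<notin> \<int>\<^sub>\<le>\<^sub>0"
  shows "fps_hypergeo [a] [b] 1 = fps_exp 1 * fps_hypergeo [b - a] [b] (-1)"
proof -
  \<comment> \<open>Both \<open>(M(a), M(a + 1))\<close> and \<open>(e\<^sup>X M(b - a, -X), e\<^sup>X M(b - a - 1, -X))\<close> solve the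
      contiguous system, whose solutions are determined by their constant terms.\<close>
  define \<beta> where "\<beta> = b - a - 1"
  define U where "U = fps_exp 1 * fps_hypergeo [\<beta> + 1] [b] (-1)"
  define V where "V = fps_exp 1 * fps_hypergeo [\<beta>] [b] (-1)"
  have XD_U: "fps_XD U = fps_const a * (V - U)"
    unfolding U_def V_def fps_XD_fps_exp_mult fps_XD_hypergeo_1F1_plus_1[OF b]
    by (simp add: \<beta>_def algebra_simps flip: fps_const_neg)
  have XD_V: "fps_XD V = fps_const \<beta> * (U - V) + fps_X * V"
    unfolding U_def V_def fps_XD_fps_exp_mult fps_XD_hypergeo_1F1
    by (simp add: algebra_simps)
  have "fps_hypergeo [a] [b] 1 - U = 0 \<and> fps_hypergeo [a + 1] [b] 1 - V = 0"
  proof (rule fps_eq_0_if_contiguous_system[OF b])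
    show "(fps_hypergeo [a] [b] 1 - U) $ 0 = 0" "(fps_hypergeo [a + 1] [b] 1 - V) $ 0 = 0"
      by (simp_all add: U_def V_def)
    show "fps_XD (fps_hypergeo [a] [b] 1 - U)
        = fps_const a * ((fps_hypergeo [a + 1] [b] 1 - V) - (fps_hypergeo [a] [b] 1 - U))"
      unfolding fps_XD_diff fps_XD_hypergeo_1F1 XD_U by (simp add: algebra_simps)
    show "fps_XD (fps_hypergeo [a + 1] [b] 1 - V)
        = fps_const (b - a - 1) * ((fps_hypergeo [a] [b] 1 - U) - (fps_hypergeo [a + 1] [b] 1 - V))
          + fps_X * (fps_hypergeo [a + 1] [b] 1 - V)"
      unfolding fps_XD_diff fps_XD_hypergeo_1F1_plus_1[OF b] XD_V by (simp add: \<beta>_def algebra_simps)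
  qed
  then show ?thesis
    by (simp add: U_def \<beta>_def)
qed

lemma conv_radius_inftyI_ratio:
  fixes f :: "nat \<Rightarrow> 'a :: {banach, real_normed_div_algebra}" and g :: "nat \<Rightarrow> real"
  assumes ratio: "eventually (\<lambda>n. norm (f (Suc n)) \<le> g n * norm (f n)) sequentially"
    and "g \<longlonglongrightarrow> 0"
  shows "conv_radius f = \<infinity>"
proof (rule conv_radius_inftyI'')
  fix z :: 'a
  have "eventually (\<lambda>n. g n < 1 / (2 * (norm z + 1))) sequentially"
    using \<open>g \<longlonglongrightarrow> 0\<close> by (rule order_tendstoD) (simp add: add_nonneg_pos)
  with ratio have "eventually (\<lambda>n. norm (f (Suc n)) \<le> g n * norm (f n)
      \<and> g n < 1 / (2 * (norm z + 1))) sequentially"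
    by (rule eventually_conj)
  then obtain N where N: "\<And>n. n \<ge> N \<Longrightarrow>
      norm (f (Suc n)) \<le> g n * norm (f n) \<and> g n < 1 / (2 * (norm z + 1))"
    unfolding eventually_sequentially by blast
  show "summable (\<lambda>n. f n * z ^ n)"
  proof (rule summable_ratio_test[of "1/2" N])
    fix n assume "n \<ge> N"
    have "g n * norm z \<le> 1/2"
    proof (cases "g n \<ge> 0")
      case True
      then have "g n * norm z \<le> g n * (norm z + 1)"
        by (simp add: mult_left_mono)
      also have "\<dots> < 1/2"
        using N[OF \<open>n \<ge> N\<close>] by (simp add: less_divide_eq add_nonneg_pos mult_ac)
      finally show ?thesis by simp
    next
      case False
      then have "g n * norm z \<le> 0"
        by (simp add: mult_nonpos_nonneg)
      then show ?thesis
        by simp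
    qed
    have "norm (f (Suc n) * z ^ Suc n) = norm (f (Suc n)) * norm z * norm z ^ n"
      by (simp add: norm_mult norm_power)
    also have "\<dots> \<le> g n * norm (f n) * norm z * norm z ^ n"
      using N[OF \<open>n \<ge> N\<close>] by (intro mult_right_mono) auto
    also have "\<dots> = (g n * norm z) * norm (f n * z ^ n)"
      by (simp add: norm_mult norm_power)
    also have "\<dots> \<le> 1/2 * norm (f n * z ^ n)"
      using \<open>g n * norm z \<le> 1/2\<close> by (intro mult_right_mono) auto
    finally show "norm (f (Suc n) * z ^ Suc n) \<le> 1/2 * norm (f n * z ^ n)" .
  qed simp
qed

lemma fps_conv_radius_hypergeo_1F1:
  fixes a b c :: complex
  assumes b: "b \<notin> \<int>\<^sub>\<le>\<^sub>0"
  shows "fps_conv_radius (fps_hypergeo [a] [b] c) = \<infinity>"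
  unfolding fps_conv_radius_def
proof (rule conv_radius_inftyI_ratio)
  define H where "H = fps_hypergeo [a] [b] c"
  define g where "g n = norm c * (norm a + n) / ((n - norm b) * (n + 1))" for n :: nat
  show "g \<longlonglongrightarrow> 0"
    unfolding g_def by real_asymp
  show "eventually (\<lambda>n. norm (fps_nth H (Suc n)) \<le> g n * norm (fps_nth H n)) sequentially"
  proof (rule eventually_mono[OF eventually_gt_at_top[of "nat \<lceil>norm b\<rceil>"]])
    fix n assume "nat \<lceil>norm b\<rceil> < n"
    then have n: "norm b < n"
      by linarith
    have "n - norm b \<le> norm (b + of_nat n)"
      using norm_triangle_ineq2[of "of_nat n" "- b"] by (simp add: add.commute)
    moreover have "norm (a + of_nat n) \<le> norm a + n"
      using norm_triangle_ineq[of a "of_nat n"] by simp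
    ultimately have "norm c * norm (a + of_nat n) / (norm (b + of_nat n) * (n + 1)) \<le> g n"
      unfolding g_def using n
      by (intro frac_le mult_left_mono mult_right_mono) auto
    moreover have "norm (H $ Suc n)
        = norm c * norm (a + of_nat n) / (norm (b + of_nat n) * (n + 1)) * norm (H $ n)"
      unfolding H_def fps_hypergeo_rec[of "[a]" "[b]" c n]
      using norm_of_nat[of "Suc n", where 'a=complex]
      by (simp add: norm_mult norm_divide mult_ac del: fps_hypergeo_nth norm_of_nat)
    ultimately show "norm (H $ Suc n) \<le> g n * norm (H $ n)"
      by (metis mult_right_mono norm_ge_zero)
  qed
qed

lemma fps_conv_radius_diff_infinite:
  fixes f g :: "'a :: {banach, real_normed_div_algebra} fps"
  shows "fps_conv_radius f = \<infinity> \<Longrightarrow> fps_conv_radius g = \<infinity> \<Longrightarrow> fps_conv_radius (f - g) = \<infinity>"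
  using fps_conv_radius_diff[of f g] by simp

lemma fps_conv_radius_mult_infinite:
  fixes f g :: "'a :: {banach, real_normed_div_algebra} fps"
  shows "fps_conv_radius f = \<infinity> \<Longrightarrow> fps_conv_radius g = \<infinity> \<Longrightarrow> fps_conv_radius (f * g) = \<infinity>"
  using fps_conv_radius_mult[of f g] by simp

lemma hyp1F1_eq_eval_fps: "hyp1F1 a b (c * z) = eval_fps (fps_hypergeo [a] [b] c) z"
  unfolding hyp1F1_def eval_fps_def by (simp add: power_mult_distrib mult_ac)

lemma hyp1F1_eq_eval_fps_1: "hyp1F1 a b = eval_fps (fps_hypergeo [a] [b] 1)"
  using hyp1F1_eq_eval_fps[of a b 1] by auto

lemma hyp1F1_0 [simp]: "hyp1F1 a b 0 = 1"
  by (simp add: hyp1F1_eq_eval_fps_1 eval_fps_at_0)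

lemma holomorphic_hyp1F1:
  assumes "b \<notin> \<int>\<^sub>\<le>\<^sub>0"
  shows "hyp1F1 a b holomorphic_on A"
  unfolding hyp1F1_eq_eval_fps_1
  by (rule holomorphic_on_eval_fps) (simp add: fps_conv_radius_hypergeo_1F1[OF assms])

theorem hyp1F1_kummer:
  assumes b: "b \<notin> \<int>\<^sub>\<le>\<^sub>0"
  shows "hyp1F1 a b z = exp z * hyp1F1 (b - a) b (- z)"
proof -
  have "hyp1F1 a b z = eval_fps (fps_exp 1 * fps_hypergeo [b - a] [b] (- 1)) z"
    by (simp add: hyp1F1_eq_eval_fps_1 fps_hypergeo_1F1_kummer[OF b])
  also have "\<dots> = exp z * eval_fps (fps_hypergeo [b - a] [b] (- 1)) z"
    by (simp add: eval_fps_mult fps_conv_radius_hypergeo_1F1[OF b])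
  finally show ?thesis
    using hyp1F1_eq_eval_fps[of "b - a" b "- 1" z] by simp
qed

lemma hyp1F1_sums:
  assumes "b \<notin> \<int>\<^sub>\<le>\<^sub>0"
  shows "(\<lambda>k. pochhammer a k / pochhammer b k * z ^ k / of_nat (fact k)) sums hyp1F1 a b z"
proof -
  have "summable (\<lambda>k. fps_hypergeo [a] [b] 1 $ k * z ^ k)"
    by (rule summable_fps) (simp add: fps_conv_radius_hypergeo_1F1[OF assms])
  also have "(\<lambda>k. fps_hypergeo [a] [b] 1 $ k * z ^ k)
      = (\<lambda>k. pochhammer a k / pochhammer b k * z ^ k / of_nat (fact k))"
    by (simp add: fun_eq_iff mult_ac)
  finally show ?thesis
    unfolding hyp1F1_def by (rule summable_sums)
qed

lemma cnj_hyp1F1: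
  assumes "b \<notin> \<int>\<^sub>\<le>\<^sub>0"
  shows "cnj (hyp1F1 a b z) = hyp1F1 (cnj a) (cnj b) (cnj z)"
proof -
  have "(\<lambda>k. pochhammer (cnj a) k / pochhammer (cnj b) k * cnj z ^ k / of_nat (fact k))
      sums cnj (hyp1F1 a b z)"
    using sums_cnj[THEN iffD2, OF hyp1F1_sums[OF assms]] by simp
  then show ?thesis
    unfolding hyp1F1_def by (simp add: sums_iff)
qed

lemma times_deriv_hyp1F1:
  assumes b: "b \<notin> \<int>\<^sub>\<le>\<^sub>0"
  shows "z * deriv (hyp1F1 a b) z = eval_fps (fps_XD (fps_hypergeo [a] [b] 1)) z"
proof -
  let ?H = "fps_hypergeo [a] [b] 1"
  have "deriv (hyp1F1 a b) z = eval_fps (fps_deriv ?H) z"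
    unfolding hyp1F1_eq_eval_fps_1
    by (intro DERIV_imp_deriv has_field_derivative_eval_fps)
       (simp add: fps_conv_radius_hypergeo_1F1[OF b])
  moreover have "fps_conv_radius (fps_deriv ?H) = \<infinity>"
    using fps_conv_radius_deriv[of ?H] by (simp add: fps_conv_radius_hypergeo_1F1[OF b])
  ultimately show ?thesis
    by (simp add: fps_XD_def eval_fps_mult)
qed

lemma hyp1F1_contiguous:
  assumes b: "b \<notin> \<int>\<^sub>\<le>\<^sub>0"
  shows "z * deriv (hyp1F1 a b) z = a * (hyp1F1 (a + 1) b z - hyp1F1 a b z)"
proof -
  let ?H0 = "fps_hypergeo [a] [b] 1" and ?H1 = "fps_hypergeo [a + 1] [b] 1"
  have "fps_conv_radius ?H0 = \<infinity>" "fps_conv_radius ?H1 = \<infinity>"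
    by (simp_all add: fps_conv_radius_hypergeo_1F1[OF b])
  moreover from this have "fps_conv_radius (?H1 - ?H0) = \<infinity>"
    by (rule fps_conv_radius_diff_infinite[rotated])
  ultimately show ?thesis
    unfolding times_deriv_hyp1F1[OF b]
    by (simp add: fps_XD_hypergeo_1F1 eval_fps_mult eval_fps_diff hyp1F1_eq_eval_fps_1)
qed

lemma hyp1F1_contiguous_plus_1:
  assumes b: "b \<notin> \<int>\<^sub>\<le>\<^sub>0"
  shows "z * deriv (hyp1F1 (a + 1) b) z
           = (b - a - 1) * (hyp1F1 a b z - hyp1F1 (a + 1) b z) + z * hyp1F1 (a + 1) b z"
proof -
  let ?H0 = "fps_hypergeo [a] [b] 1" and ?H1 = "fps_hypergeo [a + 1] [b] 1"
  have "fps_conv_radius ?H0 = \<infinity>" "fps_conv_radius ?H1 = \<infinity>"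
    by (simp_all add: fps_conv_radius_hypergeo_1F1[OF b])
  moreover from this have "fps_conv_radius (fps_const (b - a - 1) * (?H0 - ?H1)) = \<infinity>"
    and "fps_conv_radius (fps_X * ?H1) = \<infinity>"
    by (simp_all add: fps_conv_radius_mult_infinite fps_conv_radius_diff_infinite)
  ultimately show ?thesis
    unfolding times_deriv_hyp1F1[OF b]
    by (simp add: fps_XD_hypergeo_1F1_plus_1[OF b] eval_fps_mult eval_fps_diff eval_fps_add
        hyp1F1_eq_eval_fps_1 fps_conv_radius_mult_infinite fps_conv_radius_diff_infinite)
qed

lemma has_field_derivative_hyp1F1:
  assumes "b \<notin> \<int>\<^sub>\<le>\<^sub>0"
  shows "(hyp1F1 a b has_field_derivative deriv (hyp1F1 a b) s) (at s)"
  using holomorphic_on_imp_differentiable_at[OF holomorphic_hyp1F1[OF assms] open_UNIV]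
  by (simp add: DERIV_deriv_iff_field_differentiable)

lemma has_real_derivative_cmod_power2:
  fixes F :: "real \<Rightarrow> complex"
  assumes "(F has_vector_derivative F') (at t)"
  shows "((\<lambda>s. (cmod (F s))\<^sup>2) has_real_derivative 2 * Re (cnj (F t) * F')) (at t)"
proof -
  have "(\<lambda>s. (cmod (F s))\<^sup>2) = (\<lambda>s. Re (F s * cnj (F s)))"
    by (simp add: complex_mult_cnj cmod_power2)
  moreover have "((\<lambda>s. Re (F s * cnj (F s))) has_real_derivative Re (F t * cnj F' + F' * cnj (F t))) (at t)"
    by (intro derivative_intros assms)
  moreover have "Re (F t * cnj F' + F' * cnj (F t)) = 2 * Re (cnj (F t) * F')"
    by simp
  ultimately show ?thesis
    by (simp only:)
qed

lemma weighted_energy_has_real_derivative: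
  fixes F G :: "real \<Rightarrow> complex" and a w F' G' :: complex
  assumes t: "t > 0"
    and F: "(F has_vector_derivative F') (at t)" and G: "(G has_vector_derivative G') (at t)"
    and F': "of_real t * F' = - (of_real t * w / 2) * F t + a * (G t - F t)"
    and G': "of_real t * G' = cnj a * (F t - G t) + (of_real t * w / 2) * G t"
  shows "((\<lambda>s. s powr (2 * Re a) * ((cmod (F s))\<^sup>2 - (cmod (G s))\<^sup>2)) has_real_derivative
           - Re w * t powr (2 * Re a) * ((cmod (F t))\<^sup>2 + (cmod (G t))\<^sup>2)) (at t)"
proof -
  define c where "c = 2 * Re a"
  define \<phi>' where "\<phi>' = 2 * Re (cnj (F t) * F') - 2 * Re (cnj (G t) * G')"
  have \<phi>: "((\<lambda>s. (cmod (F s))\<^sup>2 - (cmod (G s))\<^sup>2) has_real_derivative \<phi>') (at t)"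
    unfolding \<phi>'_def by (intro derivative_intros has_real_derivative_cmod_power2 F G)
  have "t * \<phi>' = 2 * Re (cnj (F t) * (of_real t * F')) - 2 * Re (cnj (G t) * (of_real t * G'))"
    by (simp add: \<phi>'_def algebra_simps)
  \<comment> \<open>the coupling terms \<open>a cnj(F) G\<close> and \<open>cnj(a) cnj(G) F\<close> are conjugate, so their real parts cancel\<close>
  also have "\<dots> = - t * Re w * ((cmod (F t))\<^sup>2 + (cmod (G t))\<^sup>2)
      - c * ((cmod (F t))\<^sup>2 - (cmod (G t))\<^sup>2)"
    unfolding F' G' c_def cmod_power2 by (simp add: field_simps power2_eq_square)
  finally have \<phi>'_eq: "t * \<phi>' = \<dots>" .
  have "((\<lambda>s. s powr c) has_real_derivative c * t powr (c - 1)) (at t)"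
    using t by (intro derivative_eq_intros) auto
  from DERIV_mult[OF this \<phi>]
  have "((\<lambda>s. s powr c * ((cmod (F s))\<^sup>2 - (cmod (G s))\<^sup>2)) has_real_derivative
      c * t powr (c - 1) * ((cmod (F t))\<^sup>2 - (cmod (G t))\<^sup>2) + \<phi>' * t powr c) (at t)" .
  moreover have "c * t powr (c - 1) * ((cmod (F t))\<^sup>2 - (cmod (G t))\<^sup>2) + \<phi>' * t powr c
      = - Re w * t powr c * ((cmod (F t))\<^sup>2 + (cmod (G t))\<^sup>2)"
  proof -
    have powr: "t powr c = t powr (c - 1) * t"
      using t by (simp add: powr_diff)
    then have "c * t powr (c - 1) * ((cmod (F t))\<^sup>2 - (cmod (G t))\<^sup>2) + \<phi>' * t powr c
        = t powr (c - 1) * (c * ((cmod (F t))\<^sup>2 - (cmod (G t))\<^sup>2) + t * \<phi>')"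
      by (simp add: algebra_simps)
    also have "\<dots> = - Re w * t powr c * ((cmod (F t))\<^sup>2 + (cmod (G t))\<^sup>2)"
      unfolding \<phi>'_eq powr by (simp add: algebra_simps)
    finally show ?thesis .
  qed
  ultimately show ?thesis
    unfolding c_def by simp
qed

lemma pos_if_deriv_nonneg_and_tendsto_0:
  fixes h h' :: "real \<Rightarrow> real"
  assumes "0 < x"
    and deriv: "\<And>t. 0 < t \<Longrightarrow> t \<le> x \<Longrightarrow> (h has_real_derivative h' t) (at t)"
    and nonneg: "\<And>t. 0 < t \<Longrightarrow> t \<le> x \<Longrightarrow> h' t \<ge> 0"
    and pos: "eventually (\<lambda>t. h' t > 0) (at_right 0)"
    and lim: "(h \<longlongrightarrow> 0) (at_right 0)"
  shows "h x > 0"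
proof -
  have mono: "h s \<le> h t" if "0 < s" "s \<le> t" "t \<le> x" for s t
    by (rule DERIV_nonneg_imp_nondecreasing[OF \<open>s \<le> t\<close>]) (use that deriv nonneg in force)
  have h_nonneg: "h s \<ge> 0" if "0 < s" "s \<le> x" for s
  proof (rule tendsto_upperbound[OF lim])
    show "\<forall>\<^sub>F t in at_right 0. h t \<le> h s"
      unfolding eventually_at_right_field using that by (intro exI[of _ s]) (auto intro: mono)
  qed simp
  obtain \<delta> where "\<delta> > 0" and \<delta>: "\<And>t. 0 < t \<Longrightarrow> t < \<delta> \<Longrightarrow> h' t > 0"
    using pos unfolding eventually_at_right_field by auto
  define e where "e = min \<delta> x"
  have e: "0 < e" "e \<le> x" "e \<le> \<delta>"
    using \<open>\<delta> > 0\<close> \<open>0 < x\<close> by (auto simp: e_def)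
  have "h (e/4) < h (e/2)"
  proof (rule DERIV_pos_imp_increasing[of "e/4" "e/2" h])
    fix t assume "e/4 \<le> t" "t \<le> e/2"
    with e show "\<exists>y. DERIV h t :> y \<and> y > 0"
      by (intro exI[of _ "h' t"] conjI deriv \<delta>) auto
  qed (use e in auto)
  moreover have "h (e/2) \<le> h x" "h (e/4) \<ge> 0"
    using e by (auto intro: mono h_nonneg)
  ultimately show ?thesis
    by linarith
qed

lemma tendsto_powr_mult_at_right_0:
  fixes \<phi> :: "real \<Rightarrow> real"
  assumes "(\<phi> has_real_derivative D) (at 0)" "\<phi> 0 = 0" "c > -1"
  shows "((\<lambda>t. t powr c * \<phi> t) \<longlongrightarrow> 0) (at_right 0)"
proof -
  have "((\<lambda>t. \<phi> t / t) \<longlongrightarrow> D) (at_right 0)"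
    using assms(1,2) by (simp add: has_field_derivative_iff filterlim_at_split)
  moreover have "((\<lambda>t. t powr (c + 1)) \<longlongrightarrow> 0) (at_right 0)"
    using \<open>c > -1\<close>
    by (intro tendsto_zero_powrI tendsto_ident_at) (auto intro: eventually_at_rightI[of 0 1])
  ultimately have "((\<lambda>t. t powr (c + 1) * (\<phi> t / t)) \<longlongrightarrow> 0 * D) (at_right 0)"
    by (intro tendsto_mult)
  moreover have "eventually (\<lambda>t. t powr (c + 1) * (\<phi> t / t) = t powr c * \<phi> t) (at_right 0)"
    by (rule eventually_at_rightI[of 0 1]) (auto simp: powr_add)
  ultimately show ?thesis
    by (simp add: tendsto_cong)
qed

lemma has_vector_derivative_along_ray:
  assumes "(f has_field_derivative D) (at (of_real t * w))"
  shows "((\<lambda>t. f (of_real t * w)) has_vector_derivative w * D) (at t)"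
proof -
  have "((\<lambda>s. f (s * w)) has_field_derivative D * w) (at (of_real t))"
    using assms
    by (intro DERIV_chain2[where g = "\<lambda>s. s * w" and x = "of_real t"] derivative_eq_intros) auto
  then show ?thesis
    by (subst mult.commute) (rule has_vector_derivative_real_field)
qed

lemma norm_less_if_contiguous_system:
  fixes P Q P' Q' :: "complex \<Rightarrow> complex" and a w :: complex
  assumes a: "Re a > -1/2" and w: "Re w < 0"
    and dP: "\<And>s. (P has_field_derivative P' s) (at s)"
    and dQ: "\<And>s. (Q has_field_derivative Q' s) (at s)"
    and P': "\<And>s. s * P' s = - (s / 2) * P s + a * (Q s - P s)"
    and Q': "\<And>s. s * Q' s = cnj a * (P s - Q s) + (s / 2) * Q s"
    and "P 0 = Q 0" "P 0 \<noteq> 0"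
  shows "norm (Q w) < norm (P w)"
proof -
  define F where "F t = P (of_real t * w)" for t
  define G where "G t = Q (of_real t * w)" for t
  have dF: "(F has_vector_derivative w * P' (of_real t * w)) (at t)" for t
    unfolding F_def by (rule has_vector_derivative_along_ray[OF dP])
  have dG: "(G has_vector_derivative w * Q' (of_real t * w)) (at t)" for t
    unfolding G_def by (rule has_vector_derivative_along_ray[OF dQ])
  define h where "h t = t powr (2 * Re a) * ((cmod (F t))\<^sup>2 - (cmod (G t))\<^sup>2)" for t
  define h' where "h' t = - Re w * t powr (2 * Re a) * ((cmod (F t))\<^sup>2 + (cmod (G t))\<^sup>2)" for t
  have "h 1 > 0"
  proof (rule pos_if_deriv_nonneg_and_tendsto_0[where h=h and h'=h'])
    show "(h has_real_derivative h' t) (at t)" if "0 < t" for t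
      unfolding h_def[abs_def] h'_def
      using P'[of "of_real t * w"] Q'[of "of_real t * w"]
      by (intro weighted_energy_has_real_derivative[OF that dF dG]) (auto simp: F_def G_def mult_ac)
    show "h' t \<ge> 0" for t
      unfolding h'_def using w by (intro mult_nonneg_nonneg) auto
    have "(F \<longlongrightarrow> F 0) (at_right 0)"
      using has_vector_derivative_continuous[OF dF[of 0]]
      by (simp add: continuous_at filterlim_at_split)
    then have "eventually (\<lambda>t. F t \<noteq> 0) (at_right 0)"
      by (rule tendsto_imp_eventually_ne) (simp add: F_def \<open>P 0 \<noteq> 0\<close>)
    then show "eventually (\<lambda>t. h' t > 0) (at_right 0)"
      using eventually_at_right_less[of 0]
    proof eventually_elim
      case (elim t)
      then show ?case
        unfolding h'_def using w by (intro mult_pos_pos add_pos_nonneg) auto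
    qed
    show "(h \<longlongrightarrow> 0) (at_right 0)"
      using DERIV_diff[OF has_real_derivative_cmod_power2[OF dF[of 0]]
          has_real_derivative_cmod_power2[OF dG[of 0]]]
      unfolding h_def by (rule tendsto_powr_mult_at_right_0)
        (use a \<open>P 0 = Q 0\<close> in \<open>simp_all add: F_def G_def\<close>)
  qed simp
  then have "(cmod (G 1))\<^sup>2 < (cmod (F 1))\<^sup>2"
    by (simp add: h_def)
  then have "cmod (G 1) < cmod (F 1)"
    by (rule power_less_imp_less_base) simp
  then show ?thesis
    by (simp add: F_def G_def)
qed

lemma norm_hyp1F1_plus_1_less:
  fixes a w :: complex
  defines "b \<equiv> complex_of_real (2 * Re a + 1)"
  assumes "Re a > -1/2" and "Re w < 0"
  shows "norm (hyp1F1 (a + 1) b w) < norm (hyp1F1 a b w)"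
proof -
  have b: "b \<notin> \<int>\<^sub>\<le>\<^sub>0"
    unfolding b_def of_real_in_nonpos_Ints_iff using assms by auto
  have "b - a - 1 = cnj a"
    by (simp add: b_def complex_eq_iff)
  define P where "P \<alpha> s = exp (- s / 2) * hyp1F1 \<alpha> b s" for \<alpha> s
  define P' where "P' \<alpha> s = exp (- s / 2) * (deriv (hyp1F1 \<alpha> b) s - hyp1F1 \<alpha> b s / 2)" for \<alpha> s
  have dP: "(P \<alpha> has_field_derivative P' \<alpha> s) (at s)" for \<alpha> s
    unfolding P_def[abs_def] P'_def
    by (auto intro!: derivative_eq_intros has_field_derivative_hyp1F1[OF b] simp: algebra_simps)
  have "norm (P (a + 1) w) < norm (P a w)"
  proof (rule norm_less_if_contiguous_system[OF assms(2,3) dP dP])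
    show "s * P' a s = - (s / 2) * P a s + a * (P (a + 1) s - P a s)" for s
    proof -
      have "s * P' a s = exp (- s / 2) * (s * deriv (hyp1F1 a b) s) - (s / 2) * P a s"
        by (simp add: P_def P'_def algebra_simps)
      also have "\<dots> = - (s / 2) * P a s + a * (P (a + 1) s - P a s)"
        unfolding hyp1F1_contiguous[OF b] by (simp add: P_def algebra_simps)
      finally show ?thesis .
    qed
    show "s * P' (a + 1) s = cnj a * (P a s - P (a + 1) s) + (s / 2) * P (a + 1) s" for s
    proof -
      have "s * P' (a + 1) s
          = exp (- s / 2) * (s * deriv (hyp1F1 (a + 1) b) s) - (s / 2) * P (a + 1) s"
        by (simp add: P_def P'_def algebra_simps)
      also have "\<dots> = cnj a * (P a s - P (a + 1) s) + (s / 2) * P (a + 1) s"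
        unfolding hyp1F1_contiguous_plus_1[OF b] \<open>b - a - 1 = cnj a\<close>
        by (simp add: P_def algebra_simps)
      finally show ?thesis .
    qed
  qed (simp_all add: P_def)
  then show ?thesis
    by (simp add: P_def norm_mult)
qed

lemma hermite_biehlerI:
  assumes "E holomorphic_on UNIV" and "\<And>z. Im z > 0 \<Longrightarrow> norm (E (cnj z)) < norm (E z)"
  shows "hermite_biehler E"
  unfolding hermite_biehler_def
proof (intro conjI allI impI)
  fix z :: complex assume "Im z > 0"
  from assms(2)[OF this] show "E z \<noteq> 0" and "norm (E z) \<ge> norm (E (cnj z))"
    by auto
qed (fact assms(1))

theorem corollary2p6:
  fixes \<gamma> \<tau> :: real
  assumes "\<gamma> > -1/2"
  shows "hermite_biehler
           (\<lambda>z. hyp1F1 (complex_of_real \<gamma> + \<i> * complex_of_real \<tau>)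
                        (complex_of_real (2 * \<gamma> + 1)) (\<i> * z)
                 * exp (- \<i> * z / 2))"
proof -
  define a where "a = complex_of_real \<gamma> + \<i> * complex_of_real \<tau>"
  define b where "b = complex_of_real (2 * \<gamma> + 1)"
  have "Re a = \<gamma>"
    by (simp add: a_def)
  have b_nonpos: "b \<notin> \<int>\<^sub>\<le>\<^sub>0"
    unfolding b_def of_real_in_nonpos_Ints_iff using assms by auto
  have "cnj b = b" and "b - (a + 1) = cnj a"
    by (simp_all add: a_def b_def complex_eq_iff)
  have "hermite_biehler (\<lambda>z. hyp1F1 a b (\<i> * z) * exp (- \<i> * z / 2))"
  proof (rule hermite_biehlerI)
    show "(\<lambda>z. hyp1F1 a b (\<i> * z) * exp (- \<i> * z / 2)) holomorphic_on UNIV"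
      by (intro holomorphic_intros holomorphic_on_compose[OF _ holomorphic_hyp1F1[OF b_nonpos],
            unfolded o_def]) auto
  next
    fix z :: complex assume "Im z > 0"
    define w where "w = \<i> * z"
    have "norm (hyp1F1 a b (\<i> * cnj z) * exp (- \<i> * cnj z / 2))
        = norm (exp (- w / 2) * hyp1F1 (a + 1) b w)"
      by (subst complex_mod_cnj[symmetric])
         (simp add: cnj_hyp1F1[OF b_nonpos] \<open>cnj b = b\<close> hyp1F1_kummer[OF b_nonpos, of "a + 1"]
           \<open>b - (a + 1) = cnj a\<close> exp_cnj w_def norm_mult mult_ac flip: exp_add)
    also have "\<dots> < norm (exp (- w / 2) * hyp1F1 a b w)"
      using \<open>Im z > 0\<close> assms \<open>Re a = \<gamma>\<close> norm_hyp1F1_plus_1_less[of a w]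
      by (simp add: w_def b_def norm_mult)
    also have "\<dots> = norm (hyp1F1 a b (\<i> * z) * exp (- \<i> * z / 2))"
      by (simp add: w_def mult.commute)
    finally show "norm (hyp1F1 a b (\<i> * cnj z) * exp (- \<i> * cnj z / 2))
        < norm (hyp1F1 a b (\<i> * z) * exp (- \<i> * z / 2))" .
  qed
  then show ?thesis
    unfolding a_def b_def .
qed

end
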